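(* Let $I\subset(0,\infty)$ be an open interval and $K\mapsto\theta^*(K)$, $K\in I$, a continuously differentiable family of stable phase-locked steady states of the Kuramoto network with coupling strength $K$. Let $\lambda_n(K)$, $v_n(K)$ ($n=2,\dots,N$) be the nonzero eigenvalues of the Jacobian $J(K)$ at $\theta^*(K)$ and corresponding orthonormal eigenvectors. Then for every $K\in I$ $$\frac{d r_{\rm uni}(\theta^*(K))}{dK}=\frac{2}{K^2\sum_{i=1}^N k_i}\sum_{n=2}^N\frac{1}{-\lambda_n(K)}\,\big(v_n(K)\cdot\omega\big)^2\;\ge\;0,$$ where $\omega=(\omega_1,\dots,\omega_N)^T$.
   Context: Kuramoto network: $N\ge 2$ oscillators with phases $\theta_i(t)$ obeying $\frac{d\theta_i}{dt}=\omega_i+K\sum_{j=1}^N A_{i,j}\sin(\theta_j-\theta_i)$, where $\omega_i\in\mathbb{R}$ are natural frequencies with $\sum_{i=1}^N\omega_i=0$, $K>0$ is the coupling strength, and $A=(A_{i,j})$ is the symmetric adjacency matrix ($A_{i,j}=A_{j,i}\in\{0,1\}$, $A_{i,i}=0$) of a connected undirected graph; $k_i=\sum_j A_{i,j}$ is the degree of node $i$. A phase-locked steady state is a vector $\theta^*\in\mathbb{R}^N$ with $\omega_i+K\sum_j A_{i,j}\sin(\theta_j^*-\theta_i^* )=0$ for all $i$. Its Jacobian $J$ is the symmetric matrix with $J_{i,j}=KA_{i,j}\cos(\theta_i^*-\theta_j^* )$ for $i\neq j$ and $J_{i,i}=-K\sum_j A_{i,j}\cos(\theta_i^*-\theta_j^*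 )$; it always has eigenvalue $\lambda_1=0$ with eigenvector $(1,\dots,1)^T$. The state is called stable if all remaining eigenvalues $\lambda_2,\dots,\lambda_N$ of $J$ are strictly negative; then $0=\lambda_1>\lambda_2\ge\dots\ge\lambda_N$, with an orthonormal eigenbasis $v_1=(1,\dots,1)^T/\sqrt N, v_2,\dots,v_N$. The order parameter is $r_{\rm uni}=\frac{1}{\sum_i k_i}\sum_{i,j}A_{i,j}\langle\cos(\theta_i-\theta_j)\rangle_t$, which for a steady state equals $r_{\rm uni}(\theta^* )=\frac{1}{\sum_i k_i}\sum_{i,j}A_{i,j}\cos(\theta_i^*-\theta_j^* )$. *)

theory Defs
  imports "HOL-Analysis.Analysis"
begin

text \<open>Oscillators are indexed by 1..N; the adjacency matrix A, natural frequencies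
  omega and phases theta are functions on indices (only values on 1..N matter).\<close>

definition adjacency_ok :: "nat \<Rightarrow> (nat \<Rightarrow> nat \<Rightarrow> real) \<Rightarrow> bool" where
  "adjacency_ok N A \<longleftrightarrow>
     (\<forall>i\<in>{1..N}. \<forall>j\<in>{1..N}. (A i j = 0 \<or> A i j = 1) \<and> A i j = A j i) \<and>
     (\<forall>i\<in>{1..N}. A i i = 0)"

definition graph_connected :: "nat \<Rightarrow> (nat \<Rightarrow> nat \<Rightarrow> real) \<Rightarrow> bool" where
  "graph_connected N A \<longleftrightarrow>
     (\<forall>i\<in>{1..N}. \<forall>j\<in>{1..N}.
        (i, j) \<in> rtrancl {(a, b). a \<in> {1..N} \<and> b \<in> {1..N} \<and> A a b = 1})"

definition degree :: "nat \<Rightarrow> (nat \<Rightarrow> nat \<Rightarrow> real) \<Rightarrow> nat \<Rightarrow> real" where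
  "degree N A i = (\<Sum>j=1..N. A i j)"

definition steady_state ::
  "nat \<Rightarrow> (nat \<Rightarrow> nat \<Rightarrow> real) \<Rightarrow> (nat \<Rightarrow> real) \<Rightarrow> real \<Rightarrow> (nat \<Rightarrow> real) \<Rightarrow> bool" where
  "steady_state N A \<omega> K \<theta> \<longleftrightarrow>
     (\<forall>i\<in>{1..N}. \<omega> i + K * (\<Sum>j=1..N. A i j * sin (\<theta> j - \<theta> i)) = 0)"

definition jac :: "nat \<Rightarrow> (nat \<Rightarrow> nat \<Rightarrow> real) \<Rightarrow> real \<Rightarrow> (nat \<Rightarrow> real) \<Rightarrow> nat \<Rightarrow> nat \<Rightarrow> real" where
  "jac N A K \<theta> i j =
     (if i = j then - K * (\<Sum>l=1..N. A i l * cos (\<theta> i - \<theta> l))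
      else K * A i j * cos (\<theta> i - \<theta> j))"

definition jac_apply ::
  "nat \<Rightarrow> (nat \<Rightarrow> nat \<Rightarrow> real) \<Rightarrow> real \<Rightarrow> (nat \<Rightarrow> real) \<Rightarrow> (nat \<Rightarrow> real) \<Rightarrow> nat \<Rightarrow> real" where
  "jac_apply N A K \<theta> x i = (\<Sum>j=1..N. jac N A K \<theta> i j * x j)"

definition is_eigenpair ::
  "nat \<Rightarrow> (nat \<Rightarrow> nat \<Rightarrow> real) \<Rightarrow> real \<Rightarrow> (nat \<Rightarrow> real) \<Rightarrow> real \<Rightarrow> (nat \<Rightarrow> real) \<Rightarrow> bool" where
  "is_eigenpair N A K \<theta> \<mu> x \<longleftrightarrow>
     (\<exists>i\<in>{1..N}. x i \<noteq> 0) \<and> (\<forall>i\<in>{1..N}. jac_apply N A K \<theta> x i = \<mu> * x i)"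

text \<open>Stability: apart from the trivial eigenvalue 0 with eigenvector (1,...,1)
  (which must be simple), all eigenvalues of the symmetric Jacobian are strictly negative.
  For a symmetric matrix algebraic and geometric multiplicities agree, so this says
  exactly that the remaining eigenvalues lambda_2..lambda_N are negative.\<close>
definition stable ::
  "nat \<Rightarrow> (nat \<Rightarrow> nat \<Rightarrow> real) \<Rightarrow> real \<Rightarrow> (nat \<Rightarrow> real) \<Rightarrow> bool" where
  "stable N A K \<theta> \<longleftrightarrow>
     (\<forall>\<mu> x. is_eigenpair N A K \<theta> \<mu> x \<longrightarrow>
        \<mu> < 0 \<or> (\<mu> = 0 \<and> (\<forall>i\<in>{1..N}. \<forall>j\<in>{1..N}. x i = x j)))"

definition r_uni :: "nat \<Rightarrow> (nat \<Rightarrow> nat \<Rightarrow> real) \<Rightarrow> (nat \<Rightarrow> real) \<Rightarrow> real" where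
  "r_uni N A \<theta> = (1 / (\<Sum>i=1..N. degree N A i)) *
     (\<Sum>i=1..N. \<Sum>j=1..N. A i j * cos (\<theta> i - \<theta> j))"

end

theory Submission
  imports Defs "Jordan_Normal_Form.Determinant"
begin

text \<open>Differentiating the steady-state equations in \<open>K\<close> shows that the tangent vector
  \<open>d = d\<theta>*/dK\<close> solves \<open>J d = \<omega>/K\<close>, while differentiating \<open>r_uni\<close> and using the
  antisymmetry of \<open>A\<^sub>i\<^sub>j sin(\<theta>\<^sub>j - \<theta>\<^sub>i)\<close> together with the steady-state equations gives
  \<open>r' = -2 (d \<cdot> \<omega>) / (K \<Sum>k\<^sub>i)\<close>. Since \<open>J\<close> is symmetric and annihilates constants, \<open>\<omega>\<close> and
  the \<open>v\<^sub>n\<close> are orthogonal to \<open>(1,\<dots>,1)\<close>, so expanding \<open>d \<cdot> \<omega>\<close> in the eigenbasis yields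
  \<open>d \<cdot> \<omega> = \<Sum>\<^sub>n (v\<^sub>n \<cdot> \<omega>)\<^sup>2 / (K \<lambda>\<^sub>n)\<close>; stability makes every term of \<open>r'\<close> nonnegative.\<close>

lemma orthonormal_rows_imp_orthonormal_cols:
  fixes u :: "nat \<Rightarrow> nat \<Rightarrow> real"
  assumes on: "\<forall>r\<in>{1..N}. \<forall>s\<in>{1..N}. (\<Sum>j=1..N. u r j * u s j) = (if r = s then 1 else 0)"
    and i: "i \<in> {1..N}" and j: "j \<in> {1..N}"
  shows "(\<Sum>r=1..N. u r i * u r j) = (if i = j then 1 else 0)"
proof -
  define M where "M = mat N N (\<lambda>(r,j). u (r+1) (j+1))"
  have Mc: "M \<in> carrier_mat N N" "transpose_mat M \<in> carrier_mat N N" unfolding M_def by auto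
  have "M * transpose_mat M = 1\<^sub>m N"
  proof (rule eq_matI)
    fix a b assume ab: "a < dim_row (1\<^sub>m N)" "b < dim_col (1\<^sub>m N)"
    have "(M * transpose_mat M) $$ (a,b) = (\<Sum>k<N. u (a+1) (k+1) * u (b+1) (k+1))"
      using ab unfolding M_def by (simp add: scalar_prod_def lessThan_atLeast0)
    also have "\<dots> = (\<Sum>k=1..N. u (a+1) k * u (b+1) k)"
      using sum_bounds_lt_plus1[of "\<lambda>k. u (a+1) k * u (b+1) k" N] by simp
    also have "\<dots> = (if a = b then 1 else 0)" using on ab by auto
    finally show "(M * transpose_mat M) $$ (a,b) = 1\<^sub>m N $$ (a,b)" using ab by simp
  qed (use Mc in auto)
  then have MtM: "transpose_mat M * M = 1\<^sub>m N" using mat_mult_left_right_inverse[OF Mc] by blast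
  have ij: "i-1 < N" "j-1 < N" "Suc (i-1) = i" "Suc (j-1) = j" using i j by auto
  have "(transpose_mat M * M) $$ (i-1,j-1) = (\<Sum>k<N. u (k+1) i * u (k+1) j)"
    unfolding M_def using ij by (simp add: scalar_prod_def lessThan_atLeast0 del: Suc_pred)
  also have "\<dots> = (\<Sum>r=1..N. u r i * u r j)"
    using sum_bounds_lt_plus1[of "\<lambda>k. u k i * u k j" N] by simp
  finally show ?thesis using MtM i j by (auto split: if_splits)
qed

text \<open>Parseval's identity for vectors orthogonal to \<open>(1,\<dots>,1)\<close>: the orthonormal family
  \<open>v\<^sub>2,\<dots>,v\<^sub>N\<close> is completed to a basis by \<open>v\<^sub>1 = (1,\<dots>,1)/\<surd>N\<close>, whose coefficient of \<open>y\<close> vanishes.\<close>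

lemma sum_mult_eq_sum_coeffs_mult_if_sum_zero:
  fixes v :: "nat \<Rightarrow> nat \<Rightarrow> real" and x y :: "nat \<Rightarrow> real"
  assumes N: "N \<ge> 1"
    and orth: "\<forall>n\<in>{2..N}. \<forall>m\<in>{2..N}. (\<Sum>i=1..N. v n i * v m i) = (if n = m then 1 else 0)"
    and v_sum: "\<forall>n\<in>{2..N}. (\<Sum>i=1..N. v n i) = 0"
    and y_sum: "(\<Sum>i=1..N. y i) = 0"
  shows "(\<Sum>i=1..N. x i * y i) = (\<Sum>n=2..N. (\<Sum>i=1..N. v n i * x i) * (\<Sum>i=1..N. v n i * y i))"
proof -
  define c where "c = 1 / sqrt (real N)"
  define u where "u r = (if r = 1 then (\<lambda>_::nat. c) else v r)" for r
  have cc: "real N * (c * c) = 1" using N unfolding c_def by (simp add: field_simps)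
  have c_orth: "(\<Sum>j=1..N. c * v n j) = 0" "(\<Sum>j=1..N. v n j * c) = 0" if "n \<in> {2..N}" for n
    using v_sum that by (simp_all add: sum_distrib_left[symmetric] sum_distrib_right[symmetric])
  have "\<forall>r\<in>{1..N}. \<forall>s\<in>{1..N}. (\<Sum>j=1..N. u r j * u s j) = (if r = s then 1 else 0)"
  proof (intro ballI)
    fix r s assume r: "r \<in> {1..N}" and s: "s \<in> {1..N}"
    consider "r = 1" "s = 1" | "r = 1" "s \<in> {2..N}" | "r \<in> {2..N}" "s = 1"
      | "r \<in> {2..N}" "s \<in> {2..N}"
      using r s by fastforce
    then show "(\<Sum>j=1..N. u r j * u s j) = (if r = s then 1 else 0)"
      by cases (use cc c_orth orth in \<open>auto simp: u_def\<close>)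
  qed
  then have complete: "(\<Sum>r=1..N. u r i * u r j) = (if i = j then 1 else 0)"
    if "i \<in> {1..N}" "j \<in> {1..N}" for i j
    using orthonormal_rows_imp_orthonormal_cols that by blast
  have "(\<Sum>i=1..N. x i * y i) = (\<Sum>i=1..N. \<Sum>j=1..N. x i * y j * (if i = j then 1 else 0))"
    by (intro sum.cong refl) (simp add: if_distrib cong: if_cong)
  also have "\<dots> = (\<Sum>i=1..N. \<Sum>j=1..N. \<Sum>r=1..N. (u r i * x i) * (u r j * y j))"
    by (intro sum.cong refl) (simp add: complete[symmetric] sum_distrib_left mult_ac)
  also have "\<dots> = (\<Sum>i=1..N. \<Sum>r=1..N. \<Sum>j=1..N. (u r i * x i) * (u r j * y j))"
    by (intro sum.cong refl sum.swap)
  also have "\<dots> = (\<Sum>r=1..N. \<Sum>i=1..N. \<Sum>j=1..N. (u r i * x i) * (u r j * y j))"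
    by (rule sum.swap)
  also have "\<dots> = (\<Sum>r=1..N. (\<Sum>i=1..N. u r i * x i) * (\<Sum>j=1..N. u r j * y j))"
    by (simp add: sum_product)
  also have "\<dots> = (\<Sum>i=1..N. u 1 i * x i) * (\<Sum>j=1..N. u 1 j * y j)
      + (\<Sum>r=2..N. (\<Sum>i=1..N. u r i * x i) * (\<Sum>j=1..N. u r j * y j))"
    using N by (simp add: sum.atLeast_Suc_atMost numeral_2_eq_2)
  also have "(\<Sum>j=1..N. u 1 j * y j) = 0"
    unfolding u_def using y_sum by (simp add: sum_distrib_left[symmetric])
  finally show ?thesis by (simp add: u_def)
qed

lemma adjacency_ok_sym:
  "adjacency_ok N A \<Longrightarrow> i \<in> {1..N} \<Longrightarrow> j \<in> {1..N} \<Longrightarrow> A j i = A i j"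
  unfolding adjacency_ok_def by auto

lemma adjacency_ok_nonneg:
  assumes "adjacency_ok N A" "i \<in> {1..N}" "j \<in> {1..N}"
  shows "A i j \<ge> 0"
proof -
  have "A i j = 0 \<or> A i j = 1" using assms unfolding adjacency_ok_def by blast
  then show ?thesis by auto
qed

lemma sum_degree_nonneg:
  "adjacency_ok N A \<Longrightarrow> (\<Sum>i=1..N. degree N A i) \<ge> 0"
  unfolding degree_def by (intro sum_nonneg) (simp add: adjacency_ok_nonneg)

lemma jac_apply_eq_sum_diff:
  assumes adj: "adjacency_ok N A" and i: "i \<in> {1..N}"
  shows "jac_apply N A K \<theta> x i = K * (\<Sum>j=1..N. A i j * cos (\<theta> i - \<theta> j) * (x j - x i))"
proof -
  have Aii: "A i i = 0" using adj i unfolding adjacency_ok_def by auto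
  have "jac_apply N A K \<theta> x i = (\<Sum>j=1..N. K * A i j * cos (\<theta> i - \<theta> j) * x j
        - (if i = j then K * (\<Sum>l=1..N. A i l * cos (\<theta> i - \<theta> l)) * x i else 0))"
    unfolding jac_apply_def jac_def by (rule sum.cong) (auto simp: Aii)
  also have "\<dots> = (\<Sum>j=1..N. K * A i j * cos (\<theta> i - \<theta> j) * x j)
        - K * (\<Sum>l=1..N. A i l * cos (\<theta> i - \<theta> l)) * x i"
    using i by (simp add: sum_subtractf)
  also have "\<dots> = K * (\<Sum>j=1..N. A i j * cos (\<theta> i - \<theta> j) * (x j - x i))"
    by (simp add: algebra_simps sum_subtractf sum_distrib_left sum_distrib_right)
  finally show ?thesis .
qed

lemma jac_apply_const:
  "adjacency_ok N A \<Longrightarrow> i \<in> {1..N} \<Longrightarrow> jac_apply N A K \<theta> (\<lambda>_. c) i = 0"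
  by (simp add: jac_apply_eq_sum_diff)

lemma jac_apply_scale:
  "jac_apply N A K \<theta> (\<lambda>j. c * x j) i = c * jac_apply N A K \<theta> x i"
  by (simp add: jac_apply_def sum_distrib_left mult_ac)

lemma jac_apply_symmetric:
  assumes adj: "adjacency_ok N A"
  shows "(\<Sum>i=1..N. y i * jac_apply N A K \<theta> x i) = (\<Sum>i=1..N. x i * jac_apply N A K \<theta> y i)"
proof -
  have jac_sym: "jac N A K \<theta> i j = jac N A K \<theta> j i" if "i \<in> {1..N}" "j \<in> {1..N}" for i j
    using adjacency_ok_sym[OF adj that] cos_minus[of "\<theta> i - \<theta> j"] by (auto simp: jac_def)
  have "(\<Sum>i=1..N. y i * jac_apply N A K \<theta> x i) = (\<Sum>i=1..N. \<Sum>j=1..N. y i * jac N A K \<theta> i j * x j)"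
    unfolding jac_apply_def by (simp add: sum_distrib_left mult.assoc)
  also have "\<dots> = (\<Sum>j=1..N. \<Sum>i=1..N. y i * jac N A K \<theta> i j * x j)" by (rule sum.swap)
  also have "\<dots> = (\<Sum>j=1..N. x j * jac_apply N A K \<theta> y j)"
    unfolding jac_apply_def sum_distrib_left
    by (intro sum.cong refl) (auto simp: jac_sym mult.commute mult.left_commute)
  finally show ?thesis .
qed

lemma eigenvector_sum_zero:
  assumes adj: "adjacency_ok N A" and "\<mu> \<noteq> 0"
    and eig: "\<forall>i\<in>{1..N}. jac_apply N A K \<theta> x i = \<mu> * x i"
  shows "(\<Sum>i=1..N. x i) = 0"
proof -
  have "\<mu> * (\<Sum>i=1..N. x i) = (\<Sum>i=1..N. 1 * jac_apply N A K \<theta> x i)"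
    using eig by (simp add: sum_distrib_left)
  also have "\<dots> = (\<Sum>i=1..N. x i * jac_apply N A K \<theta> (\<lambda>_. 1) i)"
    by (rule jac_apply_symmetric[OF adj])
  also have "\<dots> = 0" by (simp add: jac_apply_const[OF adj])
  finally show ?thesis using \<open>\<mu> \<noteq> 0\<close> by simp
qed

lemma eigenvector_inner_solution:
  assumes adj: "adjacency_ok N A"
    and eig: "\<forall>i\<in>{1..N}. jac_apply N A K \<theta> v i = \<mu> * v i"
    and sol: "\<forall>i\<in>{1..N}. jac_apply N A K \<theta> x i = b i"
  shows "\<mu> * (\<Sum>i=1..N. v i * x i) = (\<Sum>i=1..N. v i * b i)"
proof -
  have "\<mu> * (\<Sum>i=1..N. v i * x i) = (\<Sum>i=1..N. x i * jac_apply N A K \<theta> v i)"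
    using eig by (simp add: sum_distrib_left mult_ac)
  also have "\<dots> = (\<Sum>i=1..N. v i * jac_apply N A K \<theta> x i)"
    by (rule jac_apply_symmetric[OF adj, symmetric])
  also have "\<dots> = (\<Sum>i=1..N. v i * b i)" using sol by simp
  finally show ?thesis .
qed

lemma sum_mult_eq_spectral_sum:
  assumes adj: "adjacency_ok N A" and N: "N \<ge> 1"
    and eig: "\<forall>n\<in>{2..N}. lam n \<noteq> 0 \<and> (\<forall>i\<in>{1..N}. jac_apply N A K \<theta> (v n) i = lam n * v n i)"
    and orth: "\<forall>n\<in>{2..N}. \<forall>m\<in>{2..N}. (\<Sum>i=1..N. v n i * v m i) = (if n = m then 1 else 0)"
    and b_sum: "(\<Sum>i=1..N. b i) = 0"
    and sol: "\<forall>i\<in>{1..N}. jac_apply N A K \<theta> x i = b i"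
  shows "(\<Sum>i=1..N. x i * b i) = (\<Sum>n=2..N. (\<Sum>i=1..N. v n i * b i)\<^sup>2 / lam n)"
proof -
  have v_sum: "\<forall>n\<in>{2..N}. (\<Sum>i=1..N. v n i) = 0"
    using eig eigenvector_sum_zero[OF adj] by blast
  have "(\<Sum>i=1..N. x i * b i) = (\<Sum>n=2..N. (\<Sum>i=1..N. v n i * x i) * (\<Sum>i=1..N. v n i * b i))"
    by (rule sum_mult_eq_sum_coeffs_mult_if_sum_zero[OF N orth v_sum b_sum])
  also have "\<dots> = (\<Sum>n=2..N. (\<Sum>i=1..N. v n i * b i)\<^sup>2 / lam n)"
  proof (intro sum.cong refl)
    fix n assume n: "n \<in> {2..N}"
    then have "lam n * (\<Sum>i=1..N. v n i * x i) = (\<Sum>i=1..N. v n i * b i)"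
      using eig by (intro eigenvector_inner_solution[OF adj _ sol]) blast
    then show "(\<Sum>i=1..N. v n i * x i) * (\<Sum>i=1..N. v n i * b i) = (\<Sum>i=1..N. v n i * b i)\<^sup>2 / lam n"
      using eig n by (auto simp: field_simps power2_eq_square)
  qed
  finally show ?thesis .
qed

lemma stable_eigenvalue_neg:
  assumes "stable N A K \<theta>" and "\<mu> \<noteq> 0" and "\<exists>i\<in>{1..N}. x i \<noteq> 0"
    and "\<forall>i\<in>{1..N}. jac_apply N A K \<theta> x i = \<mu> * x i"
  shows "\<mu> < 0"
  using assms unfolding stable_def is_eigenpair_def by blast

lemma steady_state_coupling:
  "steady_state N A \<omega> K \<theta> \<Longrightarrow> K \<noteq> 0 \<Longrightarrow> i \<in> {1..N} \<Longrightarrow>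
     (\<Sum>j=1..N. A i j * sin (\<theta> j - \<theta> i)) = - \<omega> i / K"
  unfolding steady_state_def by (simp add: field_simps add_eq_0_iff)

lemma coupling_has_real_derivative:
  assumes "\<forall>j\<in>{1..N}. ((\<lambda>K. \<theta> K j) has_real_derivative d j) (at K0)" and i: "i \<in> {1..N}"
  shows "((\<lambda>K. \<Sum>j=1..N. A i j * sin (\<theta> K j - \<theta> K i)) has_real_derivative
           (\<Sum>j=1..N. A i j * cos (\<theta> K0 j - \<theta> K0 i) * (d j - d i))) (at K0)"
  by (rule DERIV_sum, subst mult.assoc, intro DERIV_cmult DERIV_fun_sin DERIV_diff)
     (use assms in auto)

lemma steady_state_tangent:
  assumes adj: "adjacency_ok N A" and "open I" and K0: "K0 \<in> I" "K0 \<noteq> 0"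
    and steady: "\<forall>K\<in>I. steady_state N A \<omega> K (\<theta> K)"
    and d: "\<forall>j\<in>{1..N}. ((\<lambda>K. \<theta> K j) has_real_derivative d j) (at K0)"
    and i: "i \<in> {1..N}"
  shows "jac_apply N A K0 (\<theta> K0) d i = \<omega> i / K0"
proof -
  define s where "s K = (\<Sum>j=1..N. A i j * sin (\<theta> K j - \<theta> K i))" for K
  define s' where "s' = (\<Sum>j=1..N. A i j * cos (\<theta> K0 j - \<theta> K0 i) * (d j - d i))"
  have "((\<lambda>K. \<omega> i + K * s K) has_real_derivative s K0 + K0 * s') (at K0)"
    unfolding s_def s'_def
    by (rule DERIV_cong[OF DERIV_add[OF DERIV_const
          DERIV_mult[OF DERIV_ident coupling_has_real_derivative[OF d i]]]]) simp
  moreover have "((\<lambda>K. \<omega> i + K * s K) has_real_derivative 0) (at K0)"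
    by (rule has_field_derivative_transform_within_open[of "\<lambda>_. 0" 0 K0 I])
       (use assms in \<open>auto simp: s_def steady_state_def\<close>)
  ultimately have "K0 * s' = - s K0" using DERIV_unique by fastforce
  moreover have "jac_apply N A K0 (\<theta> K0) d i = K0 * s'"
    unfolding jac_apply_eq_sum_diff[OF adj i] s'_def
    by (intro arg_cong[where f="\<lambda>x. K0 * x"] sum.cong refl)
       (simp add: cos_minus[of "\<theta> K0 i - \<theta> K0 _", simplified])
  ultimately show ?thesis
    using steady_state_coupling[of N A \<omega> K0 "\<theta> K0" i] steady K0 i by (simp add: s_def)
qed

lemma sum_antisym_mult_diff:
  fixes f :: "nat \<Rightarrow> nat \<Rightarrow> real"
  assumes antisym: "\<forall>i\<in>S. \<forall>j\<in>S. f j i = - f i j"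
  shows "(\<Sum>i\<in>S. \<Sum>j\<in>S. f i j * (x i - x j)) = 2 * (\<Sum>i\<in>S. x i * (\<Sum>j\<in>S. f i j))"
proof -
  have "(\<Sum>i\<in>S. \<Sum>j\<in>S. f i j * x j) = (\<Sum>j\<in>S. \<Sum>i\<in>S. f i j * x j)"
    by (rule sum.swap)
  also have "\<dots> = (\<Sum>j\<in>S. \<Sum>i\<in>S. - (x j * f j i))"
    using antisym by (intro sum.cong refl) (metis minus_mult_left mult.commute)
  also have "\<dots> = - (\<Sum>i\<in>S. x i * (\<Sum>j\<in>S. f i j))"
    by (simp add: sum_negf sum_distrib_left)
  finally have swapped: "(\<Sum>i\<in>S. \<Sum>j\<in>S. f i j * x j) = - (\<Sum>i\<in>S. x i * (\<Sum>j\<in>S. f i j))" .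
  have "(\<Sum>i\<in>S. \<Sum>j\<in>S. f i j * (x i - x j))
      = (\<Sum>i\<in>S. \<Sum>j\<in>S. f i j * x i) - (\<Sum>i\<in>S. \<Sum>j\<in>S. f i j * x j)"
    by (simp add: right_diff_distrib sum_subtractf)
  also have "(\<Sum>i\<in>S. \<Sum>j\<in>S. f i j * x i) = (\<Sum>i\<in>S. x i * (\<Sum>j\<in>S. f i j))"
    by (simp add: sum_distrib_left mult.commute)
  finally show ?thesis using swapped by simp
qed

lemma r_uni_has_real_derivative:
  assumes adj: "adjacency_ok N A" and K0: "K0 \<noteq> 0"
    and steady: "steady_state N A \<omega> K0 (\<theta> K0)"
    and d: "\<forall>j\<in>{1..N}. ((\<lambda>K. \<theta> K j) has_real_derivative d j) (at K0)"
  shows "((\<lambda>K. r_uni N A (\<theta> K)) has_real_derivative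
           - 2 / (K0 * (\<Sum>i=1..N. degree N A i)) * (\<Sum>i=1..N. d i * \<omega> i)) (at K0)"
proof -
  define f where "f i j = A i j * sin (\<theta> K0 j - \<theta> K0 i)" for i j
  have cos_deriv: "((\<lambda>K. A i j * cos (\<theta> K i - \<theta> K j)) has_real_derivative f i j * (d i - d j)) (at K0)"
    if "i \<in> {1..N}" "j \<in> {1..N}" for i j
  proof -
    have "((\<lambda>K. A i j * cos (\<theta> K i - \<theta> K j)) has_real_derivative
            A i j * (- sin (\<theta> K0 i - \<theta> K0 j) * (d i - d j))) (at K0)"
      using d that by (intro DERIV_cmult DERIV_fun_cos DERIV_diff) auto
    moreover have "- sin (\<theta> K0 i - \<theta> K0 j) = sin (\<theta> K0 j - \<theta> K0 i)"
      by (metis minus_diff_eq sin_minus)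
    ultimately show ?thesis by (simp add: f_def mult.assoc)
  qed
  have antisym: "\<forall>i\<in>{1..N}. \<forall>j\<in>{1..N}. f j i = - f i j"
  proof (intro ballI)
    fix i j assume "i \<in> {1..N}" "j \<in> {1..N}"
    then show "f j i = - f i j"
      unfolding f_def adjacency_ok_sym[OF adj \<open>i \<in> {1..N}\<close> \<open>j \<in> {1..N}\<close>]
      by (metis minus_diff_eq mult_minus_right sin_minus)
  qed
  have "(\<Sum>i=1..N. \<Sum>j=1..N. f i j * (d i - d j)) = 2 * (\<Sum>i=1..N. d i * (\<Sum>j=1..N. f i j))"
    by (rule sum_antisym_mult_diff[OF antisym])
  also have "\<dots> = 2 * (\<Sum>i=1..N. d i * (- \<omega> i / K0))"
    using steady_state_coupling[OF steady K0] by (simp add: f_def)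
  also have "\<dots> = - 2 / K0 * (\<Sum>i=1..N. d i * \<omega> i)"
    by (simp add: sum_distrib_left sum_divide_distrib)
  finally have "(\<Sum>i=1..N. \<Sum>j=1..N. f i j * (d i - d j)) = - 2 / K0 * (\<Sum>i=1..N. d i * \<omega> i)" .
  moreover have "((\<lambda>K. r_uni N A (\<theta> K)) has_real_derivative
          1 / (\<Sum>i=1..N. degree N A i) * (\<Sum>i=1..N. \<Sum>j=1..N. f i j * (d i - d j))) (at K0)"
    unfolding r_uni_def by (intro DERIV_cmult DERIV_sum cos_deriv)
  ultimately show ?thesis by (simp add: mult.commute)
qed

theorem lemma2:
  fixes N :: nat and A :: "nat \<Rightarrow> nat \<Rightarrow> real" and \<omega> :: "nat \<Rightarrow> real"
    and I :: "real set" and \<theta> :: "real \<Rightarrow> nat \<Rightarrow> real"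
    and K0 :: real and lam :: "nat \<Rightarrow> real" and v :: "nat \<Rightarrow> nat \<Rightarrow> real"
  assumes N2: "N \<ge> 2"
    and adj: "adjacency_ok N A"
    and conn: "graph_connected N A"
    and omega_sum: "(\<Sum>i=1..N. \<omega> i) = 0"
    and I_open: "open I" and I_int: "is_interval I" and I_ne: "I \<noteq> {}"
    and I_pos: "I \<subseteq> {0<..}"
    and C1: "\<forall>i\<in>{1..N}. \<exists>\<theta>'. (\<forall>K\<in>I. ((\<lambda>K. \<theta> K i) has_real_derivative \<theta>' K) (at K))
                              \<and> continuous_on I \<theta>'"
    and steady: "\<forall>K\<in>I. steady_state N A \<omega> K (\<theta> K)"
    and stab: "\<forall>K\<in>I. stable N A K (\<theta> K)"
    and K0: "K0 \<in> I"
    and eig: "\<forall>n\<in>{2..N}. lam n \<noteq> 0 \<and> (\<forall>i\<in>{1..N}. jac_apply N A K0 (\<theta> K0) (v n) i = lam n * v n i)"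
    and orth: "\<forall>n\<in>{2..N}. \<forall>m\<in>{2..N}. (\<Sum>i=1..N. v n i * v m i) = (if n = m then 1 else 0)"
  shows "((\<lambda>K. r_uni N A (\<theta> K)) has_real_derivative
            (2 / (K0^2 * (\<Sum>i=1..N. degree N A i)) *
              (\<Sum>n=2..N. (1 / (- lam n)) * (\<Sum>i=1..N. v n i * \<omega> i)^2))) (at K0)
       \<and> 2 / (K0^2 * (\<Sum>i=1..N. degree N A i)) *
              (\<Sum>n=2..N. (1 / (- lam n)) * (\<Sum>i=1..N. v n i * \<omega> i)^2) \<ge> 0"
proof -
  define Q where "Q = (\<Sum>n=2..N. (1 / (- lam n)) * (\<Sum>i=1..N. v n i * \<omega> i)^2)"
  have K0_pos: "K0 > 0" using K0 I_pos by auto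
  have "\<forall>j\<in>{1..N}. \<exists>d. ((\<lambda>K. \<theta> K j) has_real_derivative d) (at K0)"
    using C1 K0 by blast
  then obtain d where d: "\<forall>j\<in>{1..N}. ((\<lambda>K. \<theta> K j) has_real_derivative d j) (at K0)"
    by metis
  have "\<forall>i\<in>{1..N}. jac_apply N A K0 (\<theta> K0) (\<lambda>j. K0 * d j) i = \<omega> i"
    using steady_state_tangent[OF adj I_open K0 _ steady d] K0_pos by (simp add: jac_apply_scale)
  then have "(\<Sum>i=1..N. K0 * d i * \<omega> i) = - Q"
    using sum_mult_eq_spectral_sum[OF adj _ eig orth omega_sum] N2
    by (simp add: Q_def sum_negf[symmetric])
  then have d_\<omega>: "(\<Sum>i=1..N. d i * \<omega> i) = - 1 / K0 * Q"
    using K0_pos by (simp add: mult.assoc sum_distrib_left[symmetric] field_simps)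
  have lam_neg: "lam n < 0" if n: "n \<in> {2..N}" for n
  proof (rule stable_eigenvalue_neg[of N A K0 "\<theta> K0" _ "v n"])
    have "(\<Sum>i=1..N. v n i * v n i) = 1" using orth n by simp
    then show "\<exists>i\<in>{1..N}. v n i \<noteq> 0"
      by (metis (no_types, lifting) mult_zero_left sum.neutral zero_neq_one)
  qed (use stab K0 eig n in auto)
  then have "Q \<ge> 0"
    unfolding Q_def by (intro sum_nonneg) (simp add: divide_nonneg_neg)
  moreover have "((\<lambda>K. r_uni N A (\<theta> K)) has_real_derivative
      - 2 / (K0 * (\<Sum>i=1..N. degree N A i)) * (\<Sum>i=1..N. d i * \<omega> i)) (at K0)"
    using steady K0 K0_pos by (intro r_uni_has_real_derivative[OF adj _ _ d]) auto
  ultimately show ?thesis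
    using K0_pos sum_degree_nonneg[OF adj] unfolding d_\<omega> Q_def[symmetric]
    by (simp add: power2_eq_square mult_ac)
qed

end
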